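(* Let $\lambda\ge\lambda_0$ be such that every state of $\mathcal{E}^o\cup\mathcal{E}^a$ is transient for $\{\varphi^\lambda_t\}_{t\ge0}$ (so that $\tau<\infty$ almost surely from every starting state in $\mathcal{E}^o\cup\mathcal{E}^a$). Let $M=\begin{bmatrix}T^+-\lambda I & T^-\\ T^- & T^+-\lambda I\end{bmatrix}$ (a $2p\times 2p$ matrix). Then for every $i\in\{1,\dots,p\}$ the signed measure $$B\mapsto \mathbb{E}_{i^o}\big[\mathbb{1}\{\tau\in B\}\,\beta(\varphi^\lambda_\tau)\big]=\mathbb{P}_{i^o}(\tau\in B,\varphi^\lambda_\tau=\Delta^o)-\mathbb{P}_{i^o}(\tau\in B,\varphi^\lambda_\tau=\Delta^a)$$ on Borel sets $B\subseteq[0,\infty)$ is absolutely continuous with respect to Lebesgue measure, with density $$x\mapsto \bm{e}_i^\intercal e^{(T-\lambda I)x}\bm{s}=(\bm{e}_i^\intercal,\bm{0})\,e^{Mx}\begin{bmatrix}\bm{s}\\-\bm{s}\end{bmatrix},\qquad x\ge0.$$ Moreover, the signed measure $B\mapsto \mathbb{E}_{i^a}[\mathbb{1}\{\tau\in B\}\beta(\varphi^\lambda_\tau)]$ has density $$x\mapsto -\bm{e}_i^\intercal e^{(T-\lambda I)x}\bm{s}=(\bm{0},\bm{e}_i^\intercal)\,e^{Mx}\begin{bmatrix}\bm{s}\\-\bm{s}\end{bmatrix},\qquad x\ge0.$$ Here $\bm{e}_i$ is the $i$-th standard basis column vector of $\mathbb{R}^p$ and $\bm{0}$ the zero row vector of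 $\mathbb{R}^p$.
   Context: Let $p\ge1$, let $T=(t_{ij})_{1\le i,j\le p}$ be a real $p\times p$ matrix and $\bm{s}=(s_1,\dots,s_p)^\intercal$ a real column vector. Define $p\times p$ matrices $T^+=(t^+_{ij})$, $T^-=(t^-_{ij})$ by $t^+_{ij}=\max\{0,t_{ij}\}$, $t^-_{ij}=\max\{0,-t_{ij}\}$ for $i\neq j$, and $t^+_{ii}=t_{ii}$, $t^-_{ii}=0$ (so $T^+$ has nonnegative off-diagonal entries, $T^-$ is nonnegative, and $T=T^+-T^-$). Define column vectors $\bm{s}^\pm$ by $s^\pm_i=\max\{0,\pm s_i\}$, so $\bm{s}=\bm{s}^+-\bm{s}^-$. Let $\lambda_0=\min\{r\ge0:\ t_{ii}+\sum_{j\neq i}|t_{ij}|+|s_i|\le r\text{ for all }1\le i\le p\}$. For $\lambda\ge\lambda_0$, let $\{\varphi^\lambda_t\}_{t\ge0}$ be a continuous-time Markov jump process on $\mathcal{E}=\mathcal{E}^o\cup\mathcal{E}^a\cup\{\Delta^o\}\cup\{\Delta^a\}$, where $\mathcal{E}^o=\{1^o,\dots,p^o\}$ ("original states") and $\mathcal{E}^a=\{1^a,\dots,p^a\}$ ("anti-states"), with subintensity matrix (states ordered $\mathcal{E}^o,\mathcal{E}^a,\Delta^o,\Delta^a$) $$G=\begin{bmatrix}T^+-\lambda I & T^- & \bm{s}^+ & \bm{s}^-\\ T^- & T^+-\lambda I & \bm{s}^- & \bm{s}^+\\ \bm{0}&\bm{0}&0&0\\ \bm{0}&\bm{0}&0&0\end{bmatrix}.$$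 Thus $\Delta^o,\Delta^a$ are absorbing, and from a state in $\mathcal{E}^o\cup\mathcal{E}^a$ the process is killed (terminated) at rate equal to minus the corresponding row sum of $G$ (which is $\ge0$ since $\lambda\ge\lambda_0$); upon killing it is sent to a cemetery state $\dagger$. Let $\tau=\inf\{x\ge0:\varphi^\lambda_x\notin\mathcal{E}^o\cup\mathcal{E}^a\}$ and define $\beta(\Delta^o)=1$, $\beta(\Delta^a)=-1$, $\beta(\dagger)=0$. For $j\in\mathcal{E}$, $\mathbb{P}_j,\mathbb{E}_j$ denote probability and expectation conditional on $\varphi^\lambda_0=j$. *)

theory Defs
  imports "HOL-Probability.Probability"
begin

definition mmult :: "'s set \<Rightarrow> ('s \<Rightarrow> 's \<Rightarrow> real) \<Rightarrow> ('s \<Rightarrow> 's \<Rightarrow> real) \<Rightarrow> 's \<Rightarrow> 's \<Rightarrow> real" where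
  "mmult S A B = (\<lambda>i j. \<Sum>k\<in>S. A i k * B k j)"

fun mpow :: "'s set \<Rightarrow> ('s \<Rightarrow> 's \<Rightarrow> real) \<Rightarrow> nat \<Rightarrow> 's \<Rightarrow> 's \<Rightarrow> real" where
  "mpow S A 0 = (\<lambda>i j. if i = j then 1 else 0)"
| "mpow S A (Suc n) = mmult S (mpow S A n) A"

definition mexp :: "'s set \<Rightarrow> ('s \<Rightarrow> 's \<Rightarrow> real) \<Rightarrow> 's \<Rightarrow> 's \<Rightarrow> real" where
  "mexp S A = (\<lambda>i j. \<Sum>n. mpow S A n i j / fact n)"

definition mscale :: "real \<Rightarrow> ('s \<Rightarrow> 's \<Rightarrow> real) \<Rightarrow> 's \<Rightarrow> 's \<Rightarrow> real" where
  "mscale x A = (\<lambda>i j. x * A i j)"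

text \<open>P is a probability measure under which X (paths indexed by times t \<ge> 0) is a
  Markov jump process with generator Q on S started in j: right-constant paths in S,
  and finite-dimensional distributions given by the transition function exp(Q t).\<close>
definition ctmc :: "'s set \<Rightarrow> ('s \<Rightarrow> 's \<Rightarrow> real) \<Rightarrow> 'w measure \<Rightarrow> ('w \<Rightarrow> real \<Rightarrow> 's) \<Rightarrow> 's \<Rightarrow> bool" where
  "ctmc S Q P X j \<longleftrightarrow>
     prob_space P \<and>
     (\<forall>t\<ge>0. (\<lambda>\<omega>. X \<omega> t) \<in> measurable P (count_space UNIV)) \<and>
     (\<forall>\<omega>\<in>space P. \<forall>t\<ge>0. X \<omega> t \<in> S \<and> (\<exists>\<epsilon>>0. \<forall>u. t \<le> u \<and> u < t + \<epsilon> \<longrightarrow> X \<omega> u = X \<omega> t)) \<and>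
     (\<forall>(n::nat) (t::nat \<Rightarrow> real) (k::nat \<Rightarrow> 's).
        t 0 = 0 \<and> (\<forall>m<n. t m \<le> t (Suc m)) \<and> (\<forall>m\<le>n. k m \<in> S) \<longrightarrow>
        measure P {\<omega>\<in>space P. \<forall>m\<le>n. X \<omega> (t m) = k m}
          = (if k 0 = j then 1 else 0) *
            (\<Prod>m<n. mexp S (mscale (t (Suc m) - t m) Q) (k m) (k (Suc m))))"

datatype st = Ost nat | Ast nat | DeltaO | DeltaA | Cem

definition Estates :: "nat \<Rightarrow> st set" where
  "Estates p = Ost ` {1..p} \<union> Ast ` {1..p}"

definition Sall :: "nat \<Rightarrow> st set" where
  "Sall p = Estates p \<union> {DeltaO, DeltaA, Cem}"

definition Tplus :: "(nat \<Rightarrow> nat \<Rightarrow> real) \<Rightarrow> nat \<Rightarrow> nat \<Rightarrow> real" where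
  "Tplus T i j = (if i = j then T i i else max 0 (T i j))"

definition Tminus :: "(nat \<Rightarrow> nat \<Rightarrow> real) \<Rightarrow> nat \<Rightarrow> nat \<Rightarrow> real" where
  "Tminus T i j = (if i = j then 0 else max 0 (- T i j))"

definition splus :: "(nat \<Rightarrow> real) \<Rightarrow> nat \<Rightarrow> real" where
  "splus s i = max 0 (s i)"

definition sminus :: "(nat \<Rightarrow> real) \<Rightarrow> nat \<Rightarrow> real" where
  "sminus s i = max 0 (- s i)"

definition lambda0 :: "nat \<Rightarrow> (nat \<Rightarrow> nat \<Rightarrow> real) \<Rightarrow> (nat \<Rightarrow> real) \<Rightarrow> real" where
  "lambda0 p T s = (LEAST r. 0 \<le> r \<and>
      (\<forall>i\<in>{1..p}. T i i + (\<Sum>j\<in>{1..p}-{i}. \<bar>T i j\<bar>) + \<bar>s i\<bar> \<le> r))"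

fun Gmat :: "(nat \<Rightarrow> nat \<Rightarrow> real) \<Rightarrow> (nat \<Rightarrow> real) \<Rightarrow> real \<Rightarrow> st \<Rightarrow> st \<Rightarrow> real" where
  "Gmat T s l (Ost i) (Ost j) = Tplus T i j - (if i = j then l else 0)"
| "Gmat T s l (Ost i) (Ast j) = Tminus T i j"
| "Gmat T s l (Ost i) DeltaO = splus s i"
| "Gmat T s l (Ost i) DeltaA = sminus s i"
| "Gmat T s l (Ast i) (Ost j) = Tminus T i j"
| "Gmat T s l (Ast i) (Ast j) = Tplus T i j - (if i = j then l else 0)"
| "Gmat T s l (Ast i) DeltaO = sminus s i"
| "Gmat T s l (Ast i) DeltaA = splus s i"
| "Gmat T s l _ _ = 0"

definition Qfull :: "nat \<Rightarrow> (nat \<Rightarrow> nat \<Rightarrow> real) \<Rightarrow> (nat \<Rightarrow> real) \<Rightarrow> real \<Rightarrow> st \<Rightarrow> st \<Rightarrow> real" where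
  "Qfull p T s l a b =
     (if a \<in> Estates p then
        (if b = Cem then - (\<Sum>c\<in>Estates p \<union> {DeltaO, DeltaA}. Gmat T s l a c) else Gmat T s l a b)
      else 0)"

definition tau :: "nat \<Rightarrow> ('w \<Rightarrow> real \<Rightarrow> st) \<Rightarrow> 'w \<Rightarrow> real" where
  "tau p X \<omega> = Inf {x. 0 \<le> x \<and> X \<omega> x \<notin> Estates p}"

fun beta :: "st \<Rightarrow> real" where
  "beta DeltaO = 1"
| "beta DeltaA = -1"
| "beta _ = 0"

text \<open>Transience (Norris): the set of times spent in j is a.s. bounded.\<close>
definition transient :: "'w measure \<Rightarrow> ('w \<Rightarrow> real \<Rightarrow> st) \<Rightarrow> st \<Rightarrow> bool" where
  "transient P X j \<longleftrightarrow> (AE \<omega> in P. bounded {t. 0 \<le> t \<and> X \<omega> t = j})"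

end

(*
  Since Delta^o, Delta^a and the cemetery are absorbing, the process has left E^o \<union> E^a by time x
  and entered such a state c exactly when it sits in c at time x. Hence the sub-probability
  distribution of tau on the event {X_tau = c} has distribution function x \<mapsto> exp(xQ)_(j,c), and by
  the forward equation its density is x \<mapsto> (exp(xQ) Q)_(j,c). Weighting by beta leaves exp(xG)
  applied to the difference of the columns of G into Delta^o and Delta^a, which is [s; -s].
  Finally G maps every vector [w; -w] to [(T - l I) w; -(T - l I) w] because T = T^+ - T^-,
  so exp(xG) [s; -s] = [exp(x(T - l I)) s; -exp(x(T - l I)) s].
*)
theory Submission
  imports Defs
begin

section \<open>Matrix exponential\<close>

lemma mpow_mscale: "mpow S (mscale x A) n i j = x ^ n * mpow S A n i j"
proof (induction n arbitrary: j)
  case (Suc n)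
  have "mpow S (mscale x A) (Suc n) i j = (\<Sum>k\<in>S. x ^ Suc n * (mpow S A n i k * A k j))"
    by (simp only: mpow.simps mmult_def Suc.IH) (simp add: mscale_def algebra_simps)
  then show ?case by (simp add: mmult_def sum_distrib_left)
qed simp

lemma abs_mpow_le:
  assumes "finite S" "j \<in> S"
  shows "\<bar>mpow S A n i j\<bar> \<le> (1 + (\<Sum>a\<in>S. \<Sum>b\<in>S. \<bar>A a b\<bar>)) ^ n"
  using assms(2)
proof (induction n arbitrary: j)
  case (Suc n)
  define C where "C = 1 + (\<Sum>a\<in>S. \<Sum>b\<in>S. \<bar>A a b\<bar>)"
  have "(\<Sum>k\<in>S. \<bar>A k j\<bar>) \<le> (\<Sum>k\<in>S. \<Sum>b\<in>S. \<bar>A k b\<bar>)"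
    using assms(1) Suc.prems by (intro sum_mono member_le_sum) auto
  then have col: "(\<Sum>k\<in>S. \<bar>A k j\<bar>) \<le> C"
    unfolding C_def by linarith
  have "\<bar>mpow S A (Suc n) i j\<bar> \<le> (\<Sum>k\<in>S. \<bar>mpow S A n i k\<bar> * \<bar>A k j\<bar>)"
    unfolding mpow.simps mmult_def by (rule order_trans[OF sum_abs]) (simp add: abs_mult)
  also have "\<dots> \<le> (\<Sum>k\<in>S. C ^ n * \<bar>A k j\<bar>)"
    using Suc.IH by (intro sum_mono mult_right_mono) (auto simp: C_def)
  also have "\<dots> \<le> C ^ n * C"
    using col by (simp add: sum_distrib_left[symmetric] C_def mult_left_mono sum_nonneg)
  finally show ?case by (simp add: C_def mult.commute)
qed simp

lemma summable_mpow_series: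
  assumes "finite S" "j \<in> S"
  shows "summable (\<lambda>n. mpow S A n i j / fact n * y ^ n)"
proof (rule summable_comparison_test'[where N = 0])
  define C where "C = 1 + (\<Sum>a\<in>S. \<Sum>b\<in>S. \<bar>A a b\<bar>)"
  show "summable (\<lambda>n. inverse (fact n) * (C * \<bar>y\<bar>) ^ n)"
    by (rule summable_exp)
  fix n
  have "norm (mpow S A n i j / fact n * y ^ n) = \<bar>mpow S A n i j\<bar> * \<bar>y\<bar> ^ n * inverse (fact n)"
    by (simp add: abs_mult power_abs divide_inverse)
  also have "\<dots> \<le> C ^ n * \<bar>y\<bar> ^ n * inverse (fact n)"
    using abs_mpow_le[OF assms, of A n i] by (intro mult_right_mono) (auto simp: C_def)
  finally show "norm (mpow S A n i j / fact n * y ^ n) \<le> inverse (fact n) * (C * \<bar>y\<bar>) ^ n"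
    by (simp add: power_mult_distrib mult.commute)
qed

lemma mexp_mscale_eq_suminf: "mexp S (mscale x A) i j = (\<Sum>n. mpow S A n i j / fact n * x ^ n)"
  unfolding mexp_def by (simp add: mpow_mscale mult.commute)

text \<open>Kolmogorov's forward equation, by termwise differentiation of the exponential series.\<close>
lemma has_real_derivative_mexp:
  assumes "finite S" "j \<in> S"
  shows "((\<lambda>x. mexp S (mscale x A) i j) has_real_derivative
            (\<Sum>k\<in>S. mexp S (mscale x A) i k * A k j)) (at x)"
proof -
  define c where "c n = mpow S A n i j / fact n" for n
  have "((\<lambda>x. \<Sum>n. c n * x ^ n) has_real_derivative (\<Sum>n. diffs c n * x ^ n)) (at x)"
    using summable_mpow_series[OF assms] unfolding c_def
    by (intro termdiffs_strong_converges_everywhere) simp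
  moreover have "diffs c n * x ^ n = (\<Sum>k\<in>S. mpow S A n i k / fact n * x ^ n * A k j)" for n
  proof -
    have "real (Suc n) * (v / fact (Suc n)) = v / fact n" for v :: real
      by (simp del: of_nat_Suc)
    then have "diffs c n = mpow S A (Suc n) i j / fact n"
      unfolding diffs_def c_def by simp
    then show ?thesis
      by (simp add: mmult_def sum_distrib_left sum_distrib_right sum_divide_distrib algebra_simps)
  qed
  moreover have "(\<Sum>n. \<Sum>k\<in>S. mpow S A n i k / fact n * x ^ n * A k j)
      = (\<Sum>k\<in>S. mexp S (mscale x A) i k * A k j)"
  proof -
    have row: "summable (\<lambda>n. mpow S A n i k / fact n * x ^ n)" if "k \<in> S" for k
      using summable_mpow_series[OF assms(1) that] .
    have "(\<Sum>n. \<Sum>k\<in>S. mpow S A n i k / fact n * x ^ n * A k j)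
        = (\<Sum>k\<in>S. \<Sum>n. mpow S A n i k / fact n * x ^ n * A k j)"
      using row by (intro suminf_sum summable_mult2)
    also have "\<dots> = (\<Sum>k\<in>S. mexp S (mscale x A) i k * A k j)"
      unfolding mexp_mscale_eq_suminf using row by (intro sum.cong refl suminf_mult2[symmetric])
    finally show ?thesis .
  qed
  ultimately show ?thesis
    by (simp add: c_def mexp_mscale_eq_suminf)
qed

lemma mexp_zero_row:
  assumes "i \<in> S" "\<And>d. A i d = 0"
  shows "mexp S A i j = (if i = j then 1 else 0)"
proof -
  have vanish: "mpow S A (Suc n) i k = 0" for n k
  proof (induction n arbitrary: k)
    case 0
    show ?case
      unfolding mpow.simps mmult_def using assms(2) by (intro sum.neutral) simp
  qed (simp add: mmult_def)
  have "(\<lambda>n. mpow S A n i j / fact n) = (\<lambda>n. if n = 0 then (if i = j then 1 else 0) else 0)"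
  proof
    show "mpow S A n i j / fact n = (if n = 0 then (if i = j then 1 else 0) else 0)" for n
      by (cases n) (simp_all only: vanish, simp_all)
  qed
  then show ?thesis
    unfolding mexp_def using sums_single[of 0 "\<lambda>_. if i = j then 1 else 0 :: real"]
    by (simp add: sums_iff)
qed

lemma mexp_mscale_0: "i \<in> S \<Longrightarrow> mexp S (mscale 0 A) i j = (if i = j then 1 else 0)"
  by (rule mexp_zero_row) (simp_all add: mscale_def)

lemma sum_mexp_mult_eq_suminf:
  assumes "finite S"
  shows "(\<Sum>c\<in>S. mexp S A a c * w c) = (\<Sum>n. (\<Sum>c\<in>S. mpow S A n a c * w c) / fact n)"
    and "summable (\<lambda>n. (\<Sum>c\<in>S. mpow S A n a c * w c) / fact n)"
proof -
  have exp_row: "summable (\<lambda>n. mpow S A n a c / fact n)" if "c \<in> S" for c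
    using summable_mpow_series[OF assms that, of A a 1] by simp
  then have row: "summable (\<lambda>n. mpow S A n a c / fact n * w c)" if "c \<in> S" for c
    using that by (intro summable_mult2)
  have "(\<Sum>c\<in>S. mexp S A a c * w c) = (\<Sum>c\<in>S. \<Sum>n. mpow S A n a c / fact n * w c)"
    unfolding mexp_def using exp_row by (intro sum.cong refl suminf_mult2)
  also have "\<dots> = (\<Sum>n. \<Sum>c\<in>S. mpow S A n a c / fact n * w c)"
    using row by (rule suminf_sum[symmetric])
  finally show "(\<Sum>c\<in>S. mexp S A a c * w c) = (\<Sum>n. (\<Sum>c\<in>S. mpow S A n a c * w c) / fact n)"
    by (simp add: sum_divide_distrib)
  show "summable (\<lambda>n. (\<Sum>c\<in>S. mpow S A n a c * w c) / fact n)"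
    using summable_sum[of S, OF row] by (simp add: sum_divide_distrib)
qed

lemma mpow_restrict:
  assumes "finite S" "E \<subseteq> S" "\<And>m d. m \<in> S - E \<Longrightarrow> A m d = 0"
  shows "mpow S A n j k = mpow E A n j k"
proof (induction n arbitrary: k)
  case (Suc n)
  have "mpow S A (Suc n) j k = (\<Sum>m\<in>E. mpow S A n j m * A m k)"
    unfolding mpow.simps mmult_def using assms by (intro sum.mono_neutral_right) auto
  then show ?case
    by (simp add: Suc.IH mmult_def)
qed simp

lemma mpow_cong:
  assumes "\<And>m d. m \<in> S \<Longrightarrow> d \<in> S \<Longrightarrow> A m d = B m d" "k \<in> S"
  shows "mpow S A n j k = mpow S B n j k"
  using assms(2)
proof (induction n arbitrary: k)
  case (Suc n)
  then show ?case
    unfolding mpow.simps mmult_def using assms(1) by (intro sum.cong) simp_all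
qed simp

lemma mexp_restrict:
  assumes "finite S" "E \<subseteq> S" "\<And>m d. m \<in> S - E \<Longrightarrow> A m d = 0"
  shows "mexp S A j k = mexp E A j k"
  unfolding mexp_def using mpow_restrict[OF assms] by simp

lemma mexp_cong:
  assumes "\<And>m d. m \<in> S \<Longrightarrow> d \<in> S \<Longrightarrow> A m d = B m d" "k \<in> S"
  shows "mexp S A j k = mexp S B j k"
  unfolding mexp_def using mpow_cong[OF assms] by simp

section \<open>Original states and anti-states\<close>

abbreviation diag_shift :: "(nat \<Rightarrow> nat \<Rightarrow> real) \<Rightarrow> real \<Rightarrow> nat \<Rightarrow> nat \<Rightarrow> real" where
  "diag_shift T l \<equiv> \<lambda>a b. T a b - (if a = b then l else 0)"

text \<open>The column vector [w; -w] of the paper, indexed by original states and anti-states.\<close>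
definition signed_lift :: "(nat \<Rightarrow> real) \<Rightarrow> st \<Rightarrow> real" where
  "signed_lift w c = (case c of Ost k \<Rightarrow> w k | Ast k \<Rightarrow> - w k | _ \<Rightarrow> 0)"

lemma finite_Estates: "finite (Estates p)"
  by (simp add: Estates_def)

lemma Estates_cases:
  assumes "c \<in> Estates p"
  obtains k where "k \<in> {1..p}" "c = Ost k" | k where "k \<in> {1..p}" "c = Ast k"
  using assms unfolding Estates_def by auto

lemma sum_Estates: "(\<Sum>c\<in>Estates p. f c) = (\<Sum>k\<in>{1..p}. f (Ost k)) + (\<Sum>k\<in>{1..p}. f (Ast k))"
proof -
  have "(\<Sum>c\<in>Estates p. f c) = sum f (Ost ` {1..p}) + sum f (Ast ` {1..p})"
    unfolding Estates_def by (rule sum.union_disjoint) auto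
  then show ?thesis
    by (simp add: sum.reindex inj_on_def)
qed

lemma Tplus_minus_Tminus: "Tplus T j k - Tminus T j k = T j k"
  by (simp add: Tplus_def Tminus_def max_def)

text \<open>This is where T = Tplus T - Tminus T enters.\<close>
lemma Gmat_signed_lift:
  assumes "d \<in> Estates p"
  shows "(\<Sum>c\<in>Estates p. mscale x (Gmat T s l) d c * signed_lift w c)
     = signed_lift (\<lambda>j. \<Sum>m\<in>{1..p}. mscale x (diag_shift T l) j m * w m) d"
proof -
  have split: "Tplus T j k - c = T j k - c + Tminus T j k" for j k c
    using Tplus_minus_Tminus[of T j k] by linarith
  from assms show ?thesis
    by (cases rule: Estates_cases)
      (simp_all add: sum_Estates mscale_def signed_lift_def split algebra_simps
        sum.distrib sum_subtractf sum_negf)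
qed

lemma mpow_Gmat_signed_lift:
  assumes "a \<in> Estates p"
  shows "(\<Sum>c\<in>Estates p. mpow (Estates p) (mscale x (Gmat T s l)) n a c * signed_lift w c)
     = signed_lift (\<lambda>i. \<Sum>k\<in>{1..p}. mpow {1..p} (mscale x (diag_shift T l)) n i k * w k) a"
proof (induction n arbitrary: w)
  case 0
  have delta: "(\<Sum>c\<in>S. (if a = c then 1 else 0) * f c) = f a" if "finite S" "a \<in> S"
    for a :: 'a and S and f :: "'a \<Rightarrow> real"
  proof -
    have "(\<Sum>c\<in>S. (if a = c then 1 else 0) * f c) = (\<Sum>c\<in>S. if a = c then f c else 0)"
      by (rule sum.cong) auto
    with that show ?thesis by simp
  qed
  show ?case
    unfolding mpow.simps delta[OF finite_Estates assms]
    using assms by (cases rule: Estates_cases) (simp_all add: delta signed_lift_def)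
next
  case (Suc n)
  define G where "G = mscale x (Gmat T s l)"
  define A where "A = mscale x (diag_shift T l)"
  have "(\<Sum>c\<in>Estates p. mpow (Estates p) G (Suc n) a c * signed_lift w c)
      = (\<Sum>d\<in>Estates p. mpow (Estates p) G n a d * (\<Sum>c\<in>Estates p. G d c * signed_lift w c))"
    by (simp only: mpow.simps mmult_def sum_distrib_right sum_distrib_left mult.assoc) (rule sum.swap)
  also have "\<dots> = (\<Sum>d\<in>Estates p. mpow (Estates p) G n a d
                     * signed_lift (\<lambda>j. \<Sum>m\<in>{1..p}. A j m * w m) d)"
    unfolding G_def A_def by (intro sum.cong refl) (simp add: Gmat_signed_lift)
  also have "\<dots> = signed_lift (\<lambda>i. \<Sum>k\<in>{1..p}. mpow {1..p} A n i k * (\<Sum>m\<in>{1..p}. A k m * w m)) a"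
    using Suc.IH unfolding G_def A_def by simp
  also have "(\<lambda>i. \<Sum>k\<in>{1..p}. mpow {1..p} A n i k * (\<Sum>m\<in>{1..p}. A k m * w m))
      = (\<lambda>i. \<Sum>k\<in>{1..p}. mpow {1..p} A (Suc n) i k * w k)"
    by (simp only: mpow.simps mmult_def sum_distrib_right sum_distrib_left mult.assoc)
      (rule ext, rule sum.swap)
  finally show ?case unfolding G_def A_def .
qed

lemma mexp_Gmat_signed_lift:
  assumes "a \<in> Estates p"
  shows "(\<Sum>c\<in>Estates p. mexp (Estates p) (mscale x (Gmat T s l)) a c * signed_lift w c)
     = signed_lift (\<lambda>i. \<Sum>k\<in>{1..p}. mexp {1..p} (mscale x (diag_shift T l)) i k * w k) a"
  using assms
  unfolding sum_mexp_mult_eq_suminf(1)[OF finite_Estates] sum_mexp_mult_eq_suminf(1)[OF finite_atLeastAtMost]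
    mpow_Gmat_signed_lift[OF assms]
  by (cases rule: Estates_cases)
    (simp_all add: signed_lift_def suminf_minus[OF sum_mexp_mult_eq_suminf(2)[OF finite_atLeastAtMost]])

section \<open>Absorbing Markov jump processes\<close>

locale absorbing_ctmc =
  fixes S :: "'s set" and Q :: "'s \<Rightarrow> 's \<Rightarrow> real" and P :: "'w measure"
    and X :: "'w \<Rightarrow> real \<Rightarrow> 's" and a :: 's and E :: "'s set"
  assumes finite_S: "finite S" and ctmc: "ctmc S Q P X a"
    and E_subset: "E \<subseteq> S" and start_in_E: "a \<in> E"
    and absorbing: "\<And>c d. c \<in> S - E \<Longrightarrow> Q c d = 0"
begin

sublocale prob_space P
  using ctmc unfolding ctmc_def by blast

lemma start_in_S: "a \<in> S"
  using start_in_E E_subset by blast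

lemma pred_X:
  assumes "0 \<le> t"
  shows "Measurable.pred P (\<lambda>\<omega>. R (X \<omega> t))"
proof -
  have "(\<lambda>\<omega>. X \<omega> t) \<in> measurable P (count_space UNIV)"
    using ctmc assms unfolding ctmc_def by blast
  from measurable_sets[OF this, of "Collect R"] show ?thesis
    unfolding pred_def by (simp add: vimage_def Int_def conj_commute)
qed

lemma sets_X_eq: "0 \<le> t \<Longrightarrow> {\<omega>\<in>space P. X \<omega> t = c} \<in> sets P"
  using pred_X[of t "\<lambda>x. x = c"] unfolding pred_def .

lemma sample_paths: "\<forall>\<omega>\<in>space P. \<forall>t\<ge>0. X \<omega> t \<in> S \<and> (\<exists>\<epsilon>>0. \<forall>u. t \<le> u \<and> u < t + \<epsilon> \<longrightarrow> X \<omega> u = X \<omega> t)"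
  using ctmc unfolding ctmc_def by (elim conjE)

lemma X_in_S: "\<omega> \<in> space P \<Longrightarrow> 0 \<le> t \<Longrightarrow> X \<omega> t \<in> S"
  using sample_paths by blast

lemma right_constant:
  assumes "\<omega> \<in> space P" "0 \<le> t"
  obtains \<epsilon> where "\<epsilon> > 0" "\<And>u. t \<le> u \<Longrightarrow> u < t + \<epsilon> \<Longrightarrow> X \<omega> u = X \<omega> t"
  using sample_paths assms by blast

lemma rational_time_after:
  assumes "\<omega> \<in> space P" "0 \<le> t" "t < y"
  obtains q where "q \<in> \<rat>" "t < q" "q < y" "X \<omega> q = X \<omega> t"
proof -
  obtain \<epsilon> where "\<epsilon> > 0" and const: "\<And>u. t \<le> u \<Longrightarrow> u < t + \<epsilon> \<Longrightarrow> X \<omega> u = X \<omega> t"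
    using right_constant[OF assms(1,2)] by blast
  with assms(3) have "t < min (t + \<epsilon>) y"
    by simp
  then obtain q where "q \<in> \<rat>" "t < q" "q < min (t + \<epsilon>) y"
    using Rats_dense_in_real by blast
  with const[of q] show thesis
    by (intro that[of q]) simp_all
qed

lemma measure_fdd:
  assumes "t 0 = 0" "\<forall>m<n. t m \<le> t (Suc m)" "\<forall>m\<le>n. k m \<in> S"
  shows "measure P {\<omega>\<in>space P. \<forall>m\<le>n. X \<omega> (t m) = k m}
     = (if k 0 = a then 1 else 0) * (\<Prod>m<n. mexp S (mscale (t (Suc m) - t m) Q) (k m) (k (Suc m)))"
proof -
  have "\<forall>(n::nat) (t::nat \<Rightarrow> real) (k::nat \<Rightarrow> 's).
      t 0 = 0 \<and> (\<forall>m<n. t m \<le> t (Suc m)) \<and> (\<forall>m\<le>n. k m \<in> S) \<longrightarrow>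
      measure P {\<omega>\<in>space P. \<forall>m\<le>n. X \<omega> (t m) = k m}
        = (if k 0 = a then 1 else 0) * (\<Prod>m<n. mexp S (mscale (t (Suc m) - t m) Q) (k m) (k (Suc m)))"
    using ctmc unfolding ctmc_def by (elim conjE)
  from this[rule_format, OF conjI[OF assms(1) conjI[OF assms(2,3)]]] show ?thesis .
qed

lemma measure_X_0_q_r:
  assumes "0 \<le> q" "q \<le> r" "k0 \<in> S" "k1 \<in> S" "k2 \<in> S"
  shows "measure P {\<omega>\<in>space P. X \<omega> 0 = k0 \<and> X \<omega> q = k1 \<and> X \<omega> r = k2}
     = (if k0 = a then 1 else 0) * mexp S (mscale q Q) k0 k1 * mexp S (mscale (r - q) Q) k1 k2"
proof -
  define t :: "nat \<Rightarrow> real" where "t m = (if m = 0 then 0 else if m = 1 then q else r)" for m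
  define k :: "nat \<Rightarrow> 's" where "k m = (if m = 0 then k0 else if m = 1 then k1 else k2)" for m
  have upto_2: "(\<forall>m\<le>Suc (Suc 0). R m) \<longleftrightarrow> R 0 \<and> R 1 \<and> R 2" for R :: "nat \<Rightarrow> bool"
    by (auto simp: le_Suc_eq numeral_2_eq_2)
  have "{\<omega>\<in>space P. X \<omega> 0 = k0 \<and> X \<omega> q = k1 \<and> X \<omega> r = k2}
      = {\<omega>\<in>space P. \<forall>m\<le>Suc (Suc 0). X \<omega> (t m) = k m}"
    unfolding upto_2 by (simp add: t_def k_def)
  also have "measure P \<dots>
      = (if k 0 = a then 1 else 0) * (\<Prod>m<Suc (Suc 0). mexp S (mscale (t (Suc m) - t m) Q) (k m) (k (Suc m)))"
    using assms by (intro measure_fdd) (auto simp: t_def k_def less_Suc_eq upto_2)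
  finally show ?thesis
    by (simp add: t_def k_def lessThan_Suc)
qed

lemma measure_X_0_t:
  assumes "0 \<le> t" "k0 \<in> S" "k1 \<in> S"
  shows "measure P {\<omega>\<in>space P. X \<omega> 0 = k0 \<and> X \<omega> t = k1} = (if k0 = a then 1 else 0) * mexp S (mscale t Q) k0 k1"
  using measure_X_0_q_r[of t t k0 k1 k1] assms by (simp add: mexp_mscale_0)

lemma AE_X_0: "AE \<omega> in P. X \<omega> 0 = a"
proof -
  have "prob {\<omega>\<in>space P. X \<omega> 0 = a} = 1"
    using measure_X_0_q_r[of 0 0 a a a] start_in_S by (simp add: mexp_mscale_0)
  from AE_prob_1[OF this] show ?thesis
    by auto
qed

lemma mexp_absorbing_row: "c \<in> S - E \<Longrightarrow> mexp S (mscale t Q) c d = (if c = d then 1 else 0)"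
  by (rule mexp_zero_row) (auto simp: mscale_def absorbing)

lemma AE_stays_absorbed:
  assumes "0 \<le> q" "q \<le> r" "c \<in> S - E"
  shows "AE \<omega> in P. X \<omega> q = c \<longrightarrow> X \<omega> r = c"
proof -
  have "AE \<omega> in P. \<not> (X \<omega> 0 = a \<and> X \<omega> q = c \<and> X \<omega> r = d)" if "d \<in> S - {c}" for d
  proof -
    let ?N = "{\<omega>\<in>space P. X \<omega> 0 = a \<and> X \<omega> q = c \<and> X \<omega> r = d}"
    have "?N = {\<omega>\<in>space P. X \<omega> 0 = a} \<inter> {\<omega>\<in>space P. X \<omega> q = c} \<inter> {\<omega>\<in>space P. X \<omega> r = d}"
      by blast
    then have "?N \<in> sets P"
      using sets_X_eq assms by simp
    moreover have "measure P ?N = 0"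
      using measure_X_0_q_r[OF assms(1,2) start_in_S, of c d] assms that
      by (auto simp: mexp_absorbing_row)
    ultimately have "?N \<in> null_sets P"
      by (simp add: emeasure_eq_measure null_setsI)
    from AE_not_in[OF this] show ?thesis
      by auto
  qed
  then have "AE \<omega> in P. \<forall>d\<in>S - {c}. \<not> (X \<omega> 0 = a \<and> X \<omega> q = c \<and> X \<omega> r = d)"
    using finite_S by (intro AE_finite_allI) auto
  moreover have "AE \<omega> in P. X \<omega> r \<in> S"
    using X_in_S assms by (intro AE_I2) auto
  ultimately show ?thesis
    using AE_X_0 by eventually_elim auto
qed

text \<open>Absorption holds almost surely at any two fixed times, hence simultaneously at all pairs of
  rational times; right-constancy of the paths transfers it to all times.\<close>
definition absorbed_on_rats :: "'w \<Rightarrow> bool" where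
  "absorbed_on_rats \<omega> \<longleftrightarrow>
     (\<forall>q\<in>\<rat>. \<forall>r\<in>\<rat>. \<forall>c\<in>S - E. 0 \<le> q \<longrightarrow> q \<le> r \<longrightarrow> X \<omega> q = c \<longrightarrow> X \<omega> r = c)"

lemma AE_absorbed_on_rats: "AE \<omega> in P. absorbed_on_rats \<omega>"
proof -
  have stay: "AE \<omega> in P. 0 \<le> q \<longrightarrow> q \<le> r \<longrightarrow> X \<omega> q = c \<longrightarrow> X \<omega> r = c"
    if "c \<in> S - E" for q r c
    using AE_stays_absorbed[OF _ _ that, of q r] by (cases "0 \<le> q \<and> q \<le> r") simp_all
  show ?thesis
    unfolding absorbed_on_rats_def using finite_S
    by (intro AE_ball_countable'[OF _ countable_rat] AE_finite_allI stay) auto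
qed

definition exits :: "'w \<Rightarrow> bool" where
  "exits \<omega> \<longleftrightarrow> (\<exists>x\<ge>0. X \<omega> x \<notin> E)"

text \<open>On paths that never leave E this is Inf {}, an unspecified real.\<close>
definition exit_time :: "'w \<Rightarrow> real" where
  "exit_time \<omega> = Inf {x. 0 \<le> x \<and> X \<omega> x \<notin> E}"

lemma exit_time_le: "0 \<le> x \<Longrightarrow> X \<omega> x \<notin> E \<Longrightarrow> exit_time \<omega> \<le> x"
  unfolding exit_time_def by (rule cInf_lower) (auto intro: bdd_belowI[of _ 0])

lemma exit_time_nonneg: "exits \<omega> \<Longrightarrow> 0 \<le> exit_time \<omega>"
  unfolding exit_time_def exits_def by (rule cInf_greatest) auto

lemma exit_time_less_iff_exits_before:
  assumes "exits \<omega>"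
  shows "exit_time \<omega> < y \<longleftrightarrow> (\<exists>x. 0 \<le> x \<and> x < y \<and> X \<omega> x \<notin> E)"
proof -
  have "{x. 0 \<le> x \<and> X \<omega> x \<notin> E} \<noteq> {}" "bdd_below {x. 0 \<le> x \<and> X \<omega> x \<notin> E}"
    using assms unfolding exits_def by (auto intro: bdd_belowI[of _ 0])
  from cInf_less_iff[OF this] show ?thesis
    unfolding exit_time_def by blast
qed

lemma X_exit_time_notin:
  assumes "\<omega> \<in> space P" "exits \<omega>"
  shows "X \<omega> (exit_time \<omega>) \<notin> E"
proof
  assume in_E: "X \<omega> (exit_time \<omega>) \<in> E"
  obtain \<epsilon> where "\<epsilon> > 0" and const: "\<And>u. exit_time \<omega> \<le> u \<Longrightarrow> u < exit_time \<omega> + \<epsilon> \<Longrightarrow> X \<omega> u = X \<omega> (exit_time \<omega>)"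
    using right_constant[OF assms(1) exit_time_nonneg[OF assms(2)]] by blast
  from \<open>\<epsilon> > 0\<close> obtain x where "0 \<le> x" "x < exit_time \<omega> + \<epsilon>" "X \<omega> x \<notin> E"
    using exit_time_less_iff_exits_before[OF assms(2), of "exit_time \<omega> + \<epsilon>"] by auto
  with const[of x] exit_time_le[of x \<omega>] in_E show False
    by auto
qed

text \<open>Right-constancy places rational times just after both instants, where absorption is known.\<close>
lemma X_after_exit_time:
  assumes "\<omega> \<in> space P" "absorbed_on_rats \<omega>" "exits \<omega>" "exit_time \<omega> \<le> x"
  shows "X \<omega> x = X \<omega> (exit_time \<omega>)"
proof -
  have \<tau>: "0 \<le> exit_time \<omega>"
    using exit_time_nonneg[OF assms(3)] .
  obtain r where r: "r \<in> \<rat>" "x < r" "X \<omega> r = X \<omega> x"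
    using rational_time_after[OF assms(1), of x "x + 1"] \<tau> assms(4) by auto
  obtain q where q: "q \<in> \<rat>" "exit_time \<omega> < q" "q < r" "X \<omega> q = X \<omega> (exit_time \<omega>)"
    using rational_time_after[OF assms(1) \<tau>, of r] r(2) assms(4) by auto
  have "X \<omega> q \<in> S - E"
    using X_in_S[OF assms(1) \<tau>] X_exit_time_notin[OF assms(1,3)] q(4) by simp
  moreover have "0 \<le> q" "q \<le> r"
    using \<tau> q(2,3) by linarith+
  ultimately have "X \<omega> r = X \<omega> q"
    using assms(2) q(1) r(1) unfolding absorbed_on_rats_def by blast
  with q(4) r(3) show ?thesis
    by simp
qed

lemma exited_into_iff:
  assumes "\<omega> \<in> space P" "absorbed_on_rats \<omega>" "0 \<le> x" "c \<in> S - E"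
  shows "(exits \<omega> \<and> exit_time \<omega> \<le> x \<and> X \<omega> (exit_time \<omega>) = c) \<longleftrightarrow> X \<omega> x = c"
proof
  assume "X \<omega> x = c"
  moreover from this have "exits \<omega>" "exit_time \<omega> \<le> x"
    using assms(3,4) exit_time_le[of x \<omega>] unfolding exits_def by auto
  ultimately show "exits \<omega> \<and> exit_time \<omega> \<le> x \<and> X \<omega> (exit_time \<omega>) = c"
    using X_after_exit_time[OF assms(1,2), of x] by simp
next
  assume "exits \<omega> \<and> exit_time \<omega> \<le> x \<and> X \<omega> (exit_time \<omega>) = c"
  with X_after_exit_time[OF assms(1,2), of x] show "X \<omega> x = c"
    by simp
qed

lemma exits_iff_rat:
  assumes "\<omega> \<in> space P"
  shows "exits \<omega> \<longleftrightarrow> (\<exists>q\<in>\<rat> \<inter> {0..}. X \<omega> q \<notin> E)"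
proof
  assume "exits \<omega>"
  then obtain x where x: "0 \<le> x" "X \<omega> x \<notin> E"
    unfolding exits_def by blast
  then obtain q where "q \<in> \<rat>" "x < q" "X \<omega> q = X \<omega> x"
    using rational_time_after[OF assms x(1), of "x + 1"] by auto
  with x show "\<exists>q\<in>\<rat> \<inter> {0..}. X \<omega> q \<notin> E"
    by (intro bexI[of _ q]) auto
qed (auto simp: exits_def)

lemma exit_time_less_iff:
  assumes "\<omega> \<in> space P"
  shows "exit_time \<omega> < y \<longleftrightarrow>
    (\<exists>q\<in>\<rat> \<inter> {0..}. q < y \<and> X \<omega> q \<notin> E) \<or> (\<not> (\<exists>q\<in>\<rat> \<inter> {0..}. X \<omega> q \<notin> E) \<and> Inf {} < y)"
proof (cases "exits \<omega>")
  case True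
  have "(\<exists>x\<ge>0. x < y \<and> X \<omega> x \<notin> E) \<longleftrightarrow> (\<exists>q\<in>\<rat> \<inter> {0..}. q < y \<and> X \<omega> q \<notin> E)"
  proof
    assume "\<exists>x\<ge>0. x < y \<and> X \<omega> x \<notin> E"
    then obtain x where x: "0 \<le> x" "x < y" "X \<omega> x \<notin> E"
      by blast
    then obtain q where "q \<in> \<rat>" "x < q" "q < y" "X \<omega> q = X \<omega> x"
      using rational_time_after[OF assms x(1,2)] by blast
    with x show "\<exists>q\<in>\<rat> \<inter> {0..}. q < y \<and> X \<omega> q \<notin> E"
      by (intro bexI[of _ q]) auto
  qed auto
  with True show ?thesis
    using exit_time_less_iff_exits_before[OF True] exits_iff_rat[OF assms] by auto
next
  case False
  then have "{x. 0 \<le> x \<and> X \<omega> x \<notin> E} = {}"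
    unfolding exits_def by auto
  then have "exit_time \<omega> = Inf {}"
    unfolding exit_time_def by (rule arg_cong[where f = Inf])
  with False show ?thesis
    using exits_iff_rat[OF assms] by auto
qed

lemma borel_measurable_exit_time[measurable]: "exit_time \<in> borel_measurable P"
  unfolding borel_measurable_iff_less
proof
  fix y :: real
  have "{\<omega>\<in>space P. exit_time \<omega> < y} = {\<omega>\<in>space P.
      (\<exists>q\<in>\<rat> \<inter> {0..}. q < y \<and> X \<omega> q \<notin> E) \<or> (\<not> (\<exists>q\<in>\<rat> \<inter> {0..}. X \<omega> q \<notin> E) \<and> Inf {} < y)}"
    using exit_time_less_iff by blast
  also have "\<dots> \<in> sets P"
    unfolding pred_def[symmetric] using countable_rat
    by (intro pred_intros_logic pred_intros_conj1' pred_intros_conj2' measurable_pred_countable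
        countable_Int1 pred_X) auto
  finally show "{\<omega>\<in>space P. exit_time \<omega> < y} \<in> sets P" .
qed

lemma X_exit_time_eq_iff:
  assumes "\<omega> \<in> space P" "exits \<omega>"
  shows "X \<omega> (exit_time \<omega>) = c \<longleftrightarrow> (\<exists>n::nat. \<forall>q\<in>\<rat> \<inter> {0..}.
     exit_time \<omega> < q \<longrightarrow> q < exit_time \<omega> + inverse (Suc n) \<longrightarrow> X \<omega> q = c)"
proof -
  have \<tau>: "0 \<le> exit_time \<omega>"
    using exit_time_nonneg[OF assms(2)] .
  obtain \<epsilon> where "\<epsilon> > 0"
    and const: "\<And>u. exit_time \<omega> \<le> u \<Longrightarrow> u < exit_time \<omega> + \<epsilon> \<Longrightarrow> X \<omega> u = X \<omega> (exit_time \<omega>)"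
    using right_constant[OF assms(1) \<tau>] by blast
  show ?thesis
  proof
    assume c: "X \<omega> (exit_time \<omega>) = c"
    from \<open>\<epsilon> > 0\<close> obtain n where n: "inverse (Suc n) < \<epsilon>"
      using reals_Archimedean by blast
    show "\<exists>n::nat. \<forall>q\<in>\<rat> \<inter> {0..}.
        exit_time \<omega> < q \<longrightarrow> q < exit_time \<omega> + inverse (Suc n) \<longrightarrow> X \<omega> q = c"
    proof (intro exI[of _ n] ballI impI)
      fix q assume "exit_time \<omega> < q" "q < exit_time \<omega> + inverse (Suc n)"
      with const[of q] n c show "X \<omega> q = c"
        by simp
    qed
  next
    assume "\<exists>n::nat. \<forall>q\<in>\<rat> \<inter> {0..}.
        exit_time \<omega> < q \<longrightarrow> q < exit_time \<omega> + inverse (Suc n) \<longrightarrow> X \<omega> q = c"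
    then obtain n where n: "\<And>q. q \<in> \<rat> \<inter> {0..} \<Longrightarrow> exit_time \<omega> < q \<Longrightarrow>
        q < exit_time \<omega> + inverse (Suc n) \<Longrightarrow> X \<omega> q = c"
      by blast
    have "exit_time \<omega> < exit_time \<omega> + inverse (Suc n)"
      by simp
    then obtain q where "q \<in> \<rat>" "exit_time \<omega> < q" "q < exit_time \<omega> + inverse (Suc n)"
      "X \<omega> q = X \<omega> (exit_time \<omega>)"
      using rational_time_after[OF assms(1) \<tau>] by blast
    with n[of q] \<tau> show "X \<omega> (exit_time \<omega>) = c"
      by simp
  qed
qed

definition exit_event :: "'s \<Rightarrow> 'w set" where
  "exit_event c = {\<omega>\<in>space P. exits \<omega> \<and> X \<omega> (exit_time \<omega>) = c}"

lemma sets_exit_event[measurable]: "exit_event c \<in> sets P"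
proof -
  have "exit_event c = {\<omega>\<in>space P. (\<exists>q\<in>\<rat> \<inter> {0..}. X \<omega> q \<notin> E) \<and> (\<exists>n::nat. \<forall>q\<in>\<rat> \<inter> {0..}.
      exit_time \<omega> < q \<longrightarrow> q < exit_time \<omega> + inverse (Suc n) \<longrightarrow> X \<omega> q = c)}"
    unfolding exit_event_def using exits_iff_rat X_exit_time_eq_iff by blast
  also have "\<dots> \<in> sets P"
    unfolding pred_def[symmetric] using countable_rat
    by (intro pred_intros_logic pred_intros_countable measurable_pred_countable countable_Int1 pred_X)
      (auto intro: borel_measurable_less borel_measurable_add borel_measurable_const
        borel_measurable_exit_time simp: pred_def)
  finally show ?thesis .
qed

lemma sets_exit_time_in: "B \<in> sets borel \<Longrightarrow> {\<omega>\<in>space P. exit_time \<omega> \<in> B} \<in> sets P"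
  using measurable_sets[OF borel_measurable_exit_time] by (simp add: vimage_def Int_def conj_commute)

definition trans_prob :: "'s \<Rightarrow> real \<Rightarrow> real" where
  "trans_prob c x = mexp S (mscale x Q) a c"

definition exit_density :: "'s \<Rightarrow> real \<Rightarrow> real" where
  "exit_density c x = (\<Sum>k\<in>S. mexp S (mscale x Q) a k * Q k c)"

lemma has_real_derivative_trans_prob:
  "c \<in> S \<Longrightarrow> (trans_prob c has_real_derivative exit_density c x) (at x)"
  unfolding trans_prob_def[abs_def] exit_density_def by (rule has_real_derivative_mexp[OF finite_S])

lemma trans_prob_0: "c \<in> S - E \<Longrightarrow> trans_prob c 0 = 0"
  unfolding trans_prob_def using mexp_mscale_0[OF start_in_S] start_in_E by auto

lemma trans_prob_eq_measure:
  "0 \<le> x \<Longrightarrow> c \<in> S \<Longrightarrow> trans_prob c x = measure P {\<omega>\<in>space P. X \<omega> 0 = a \<and> X \<omega> x = c}"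
  unfolding trans_prob_def using measure_X_0_t[of x a c] start_in_S by simp

lemma trans_prob_mono:
  assumes "c \<in> S - E" "0 \<le> x" "x \<le> y"
  shows "trans_prob c x \<le> trans_prob c y"
proof -
  have "trans_prob c x = measure P {\<omega>\<in>space P. X \<omega> 0 = a \<and> X \<omega> x = c \<and> X \<omega> y = c}"
    using measure_X_0_q_r[OF assms(2,3) start_in_S, of c c] assms
    by (simp add: trans_prob_def mexp_absorbing_row)
  also have "\<dots> \<le> measure P {\<omega>\<in>space P. X \<omega> 0 = a \<and> X \<omega> y = c}"
  proof (rule finite_measure_mono)
    have "{\<omega>\<in>space P. X \<omega> 0 = a \<and> X \<omega> y = c} = {\<omega>\<in>space P. X \<omega> 0 = a} \<inter> {\<omega>\<in>space P. X \<omega> y = c}"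
      by blast
    then show "{\<omega>\<in>space P. X \<omega> 0 = a \<and> X \<omega> y = c} \<in> sets P"
      using sets_X_eq assms by simp
  qed blast
  also have "\<dots> = trans_prob c y"
    using trans_prob_eq_measure[of y c] assms by simp
  finally show ?thesis .
qed

lemma exit_density_nonneg:
  assumes "c \<in> S - E" "0 \<le> x"
  shows "0 \<le> exit_density c x"
proof (rule ccontr)
  assume "\<not> 0 \<le> exit_density c x"
  then have "exit_density c x < 0"
    by simp
  then obtain d where "d > 0" and decr: "\<And>h. h > 0 \<Longrightarrow> h < d \<Longrightarrow> trans_prob c (x + h) < trans_prob c x"
    using has_real_derivative_neg_dec_right[OF has_real_derivative_trans_prob] assms(1) by blast
  then have "trans_prob c (x + d / 2) < trans_prob c x"
    by simp
  moreover have "trans_prob c x \<le> trans_prob c (x + d / 2)"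
    using trans_prob_mono assms \<open>d > 0\<close> by simp
  ultimately show False
    by simp
qed

lemma borel_measurable_exit_density[measurable]: "exit_density c \<in> borel_measurable borel"
proof (rule borel_measurable_continuous_onI)
  have "isCont (\<lambda>x. mexp S (mscale x Q) a k) x" if "k \<in> S" for k x
    using has_real_derivative_mexp[OF finite_S that] by (rule DERIV_isCont)
  then have "isCont (exit_density c) x" for x
    unfolding exit_density_def by (intro isCont_sum ballI isCont_mult) auto
  then show "continuous_on UNIV (exit_density c)"
    by (simp add: continuous_at_imp_continuous_on)
qed

lemma nn_integral_exit_density_Icc:
  assumes "c \<in> S - E" "0 \<le> x"
  shows "(\<integral>\<^sup>+t. ennreal (exit_density c t) * indicator {0..x} t \<partial>lborel) = ennreal (trans_prob c x)"
  using assms trans_prob_0[OF assms(1)]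
  by (subst nn_integral_FTC_Icc[where F="trans_prob c"])
    (auto intro: has_real_derivative_trans_prob exit_density_nonneg)

lemma emeasure_exit_event_exit_time_le:
  assumes "c \<in> S - E" "0 \<le> x"
  shows "emeasure P (exit_event c \<inter> {\<omega>\<in>space P. exit_time \<omega> \<le> x}) = ennreal (trans_prob c x)"
proof -
  have "emeasure P (exit_event c \<inter> {\<omega>\<in>space P. exit_time \<omega> \<le> x})
      = emeasure P {\<omega>\<in>space P. X \<omega> 0 = a \<and> X \<omega> x = c}"
  proof (rule emeasure_eq_AE)
    show "AE \<omega> in P. (\<omega> \<in> exit_event c \<inter> {\<omega>\<in>space P. exit_time \<omega> \<le> x})
        = (\<omega> \<in> {\<omega>\<in>space P. X \<omega> 0 = a \<and> X \<omega> x = c})"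
      using AE_X_0 AE_absorbed_on_rats AE_space
    proof eventually_elim
      case (elim \<omega>)
      then show ?case
        using exited_into_iff[OF elim(3,2) assms(2,1)] unfolding exit_event_def by blast
    qed
    have "{\<omega>\<in>space P. X \<omega> 0 = a \<and> X \<omega> x = c} = {\<omega>\<in>space P. X \<omega> 0 = a} \<inter> {\<omega>\<in>space P. X \<omega> x = c}"
      by blast
    then show "{\<omega>\<in>space P. X \<omega> 0 = a \<and> X \<omega> x = c} \<in> sets P"
      using sets_X_eq assms by simp
  qed measurable
  also have "\<dots> = ennreal (trans_prob c x)"
    using trans_prob_eq_measure[of x c] assms by (simp add: emeasure_eq_measure)
  finally show ?thesis .
qed

lemma emeasure_distr_exit_time:
  assumes "A \<in> sets borel"
  shows "emeasure (distr (density P (indicator (exit_event c))) borel exit_time) A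
       = emeasure P (exit_event c \<inter> {\<omega>\<in>space P. exit_time \<omega> \<in> A})"
proof -
  have "emeasure (distr (density P (indicator (exit_event c))) borel exit_time) A
      = (\<integral>\<^sup>+\<omega>. indicator (exit_event c) \<omega> * indicator (exit_time -` A \<inter> space P) \<omega> \<partial>P)"
    using assms measurable_sets[OF borel_measurable_exit_time assms]
    by (simp add: emeasure_distr emeasure_density)
  also have "\<dots> = (\<integral>\<^sup>+\<omega>. indicator (exit_event c \<inter> {\<omega>\<in>space P. exit_time \<omega> \<in> A}) \<omega> \<partial>P)"
    by (intro nn_integral_cong) (auto simp: indicator_def)
  also have "\<dots> = emeasure P (exit_event c \<inter> {\<omega>\<in>space P. exit_time \<omega> \<in> A})"
    using sets_exit_time_in[OF assms] by (intro nn_integral_indicator) auto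
  finally show ?thesis .
qed

lemma exit_event_exit_time_nonneg: "\<omega> \<in> exit_event c \<Longrightarrow> 0 \<le> exit_time \<omega>"
  unfolding exit_event_def using exit_time_nonneg by blast

text \<open>Both sides are finite measures on the line; they agree on every half line
  (-\<infinity>, x], the left one by absorption and the right one by the fundamental theorem of calculus.\<close>
lemma distr_exit_time_eq_density:
  assumes c: "c \<in> S - E"
  shows "distr (density P (indicator (exit_event c))) borel exit_time
       = density lborel (\<lambda>t. ennreal (exit_density c t) * indicator {0..} t)"
    (is "?L = ?R")
proof (rule measure_eqI_generator_eq[where \<Omega> = UNIV and E = "range atMost" and A = "\<lambda>i. {..real i}"])
  have borel_atMost: "sets borel = sigma_sets UNIV (range (atMost :: real \<Rightarrow> real set))"
    by (subst borel_eq_atMost) (simp add: sets_measure_of)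
  show "sets ?L = sigma_sets UNIV (range atMost)" "sets ?R = sigma_sets UNIV (range atMost)"
    by (simp_all flip: borel_atMost)
  show "Int_stable (range (atMost :: real \<Rightarrow> real set))"
    unfolding Int_stable_def by (auto intro: exI[of _ "min _ _"])
  show "range atMost \<subseteq> Pow (UNIV :: real set)" "range (\<lambda>i. {..real i}) \<subseteq> range atMost"
    "(\<Union>i. {..real i}) = UNIV"
    by (auto intro: real_arch_simple)
  show "emeasure ?L {..real i} \<noteq> \<infinity>" for i
    by (simp add: emeasure_distr_exit_time)
  fix Z :: "real set" assume "Z \<in> range atMost"
  then obtain x :: real where Z: "Z = {..x}"
    by auto
  have R: "emeasure ?R {..x} = (\<integral>\<^sup>+t. ennreal (exit_density c t) * indicator {0..} t * indicator {..x} t \<partial>lborel)"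
    by (simp add: emeasure_density)
  show "emeasure ?L Z = emeasure ?R Z"
  proof (cases "0 \<le> x")
    case True
    have "{\<omega>\<in>space P. exit_time \<omega> \<in> {..x}} = {\<omega>\<in>space P. exit_time \<omega> \<le> x}"
      by auto
    then have "emeasure ?L {..x} = ennreal (trans_prob c x)"
      using emeasure_exit_event_exit_time_le[OF c True] by (simp add: emeasure_distr_exit_time)
    also have "\<dots> = (\<integral>\<^sup>+t. ennreal (exit_density c t) * indicator {0..x} t \<partial>lborel)"
      using nn_integral_exit_density_Icc[OF c True] by simp
    also have "\<dots> = emeasure ?R {..x}"
      unfolding R by (intro nn_integral_cong) (auto simp: indicator_def)
    finally show ?thesis
      unfolding Z .
  next
    case False
    then have "exit_event c \<inter> {\<omega>\<in>space P. exit_time \<omega> \<in> {..x}} = {}"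
      using exit_event_exit_time_nonneg by force
    moreover have "emeasure ?R {..x} = 0"
      unfolding R using False by (intro nn_integral_zero') (auto simp: indicator_def)
    ultimately show ?thesis
      unfolding Z by (simp add: emeasure_distr_exit_time)
  qed
qed

lemma nn_integral_exit_density:
  assumes "c \<in> S - E" "B \<in> sets borel" "B \<subseteq> {0..}"
  shows "(\<integral>\<^sup>+t. ennreal (indicator B t * exit_density c t) \<partial>lborel)
       = emeasure P (exit_event c \<inter> {\<omega>\<in>space P. exit_time \<omega> \<in> B})"
proof -
  have "(\<integral>\<^sup>+t. ennreal (indicator B t * exit_density c t) \<partial>lborel)
      = (\<integral>\<^sup>+t. ennreal (exit_density c t) * indicator {0..} t * indicator B t \<partial>lborel)"
    using assms(3) by (intro nn_integral_cong) (auto simp: indicator_def)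
  also have "\<dots> = emeasure (density lborel (\<lambda>t. ennreal (exit_density c t) * indicator {0..} t)) B"
    using assms(2) by (simp add: emeasure_density)
  finally show ?thesis
    using assms by (simp add: emeasure_distr_exit_time flip: distr_exit_time_eq_density)
qed

lemma set_integrable_exit_density:
  assumes "c \<in> S - E"
  shows "set_integrable lborel {0..} (exit_density c)"
  unfolding set_integrable_def
proof (rule integrableI_nonneg)
  show "AE t in lborel. 0 \<le> indicator {0..} t *\<^sub>R exit_density c t"
    using exit_density_nonneg[OF assms] by (intro AE_I2) (simp add: indicator_def)
  have "(\<integral>\<^sup>+t. ennreal (indicator {0..} t *\<^sub>R exit_density c t) \<partial>lborel)
      = emeasure P (exit_event c \<inter> {\<omega>\<in>space P. exit_time \<omega> \<in> {0..}})"
    using nn_integral_exit_density[OF assms, of "{0..}"] by simp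
  also have "\<dots> < \<infinity>"
    by (simp add: less_top[symmetric])
  finally show "(\<integral>\<^sup>+t. ennreal (indicator {0..} t *\<^sub>R exit_density c t) \<partial>lborel) < \<infinity>" .
qed measurable

lemma measure_exit_event_exit_time_in:
  assumes "c \<in> S - E" "B \<in> sets borel" "B \<subseteq> {0..}"
  shows "measure P (exit_event c \<inter> {\<omega>\<in>space P. exit_time \<omega> \<in> B}) = (LINT t:B|lborel. exit_density c t)"
proof -
  have "set_integrable lborel B (exit_density c)"
    using set_integrable_subset[OF set_integrable_exit_density] assms by auto
  moreover have nonneg: "0 \<le> indicator B t * exit_density c t" for t
    using exit_density_nonneg[OF assms(1)] assms(3) by (auto simp: indicator_def)
  ultimately have "ennreal (LINT t:B|lborel. exit_density c t)
      = (\<integral>\<^sup>+t. ennreal (indicator B t * exit_density c t) \<partial>lborel)"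
    unfolding set_integrable_def set_lebesgue_integral_def
    by (simp add: nn_integral_eq_integral)
  also have "\<dots> = ennreal (measure P (exit_event c \<inter> {\<omega>\<in>space P. exit_time \<omega> \<in> B}))"
    using nn_integral_exit_density[OF assms] by (simp add: emeasure_eq_measure)
  moreover have "0 \<le> (LINT t:B|lborel. exit_density c t)"
    unfolding set_lebesgue_integral_def using nonneg by (simp add: integral_nonneg_AE)
  ultimately show ?thesis
    by (simp add: ennreal_inj)
qed

lemma exit_value_eq_sum_indicator:
  fixes f :: "'s \<Rightarrow> real"
  assumes "\<omega> \<in> space P" "\<forall>c\<in>E. f c = 0" "B \<subseteq> {0..}"
  shows "indicator B (exit_time \<omega>) * f (X \<omega> (exit_time \<omega>))
       = (\<Sum>c\<in>S - E. f c * indicator (exit_event c \<inter> {\<omega>\<in>space P. exit_time \<omega> \<in> B}) \<omega>)"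
proof (cases "exits \<omega>")
  case True
  define d where "d = X \<omega> (exit_time \<omega>)"
  have "d \<in> S - E"
    unfolding d_def using X_in_S[OF assms(1) exit_time_nonneg[OF True]] X_exit_time_notin[OF assms(1) True]
    by simp
  have "(indicator (exit_event c \<inter> {\<omega>\<in>space P. exit_time \<omega> \<in> B}) \<omega> :: real)
      = (if c = d then indicator B (exit_time \<omega>) else 0)" for c :: 's
    using True assms(1) unfolding exit_event_def d_def by (auto simp: indicator_def)
  then have "(\<Sum>c\<in>S - E. f c * indicator (exit_event c \<inter> {\<omega>\<in>space P. exit_time \<omega> \<in> B}) \<omega>)
      = (\<Sum>c\<in>S - E. if c = d then f d * indicator B (exit_time \<omega>) else 0)"
    by (intro sum.cong) simp_all
  also have "\<dots> = indicator B (exit_time \<omega>) * f (X \<omega> (exit_time \<omega>))"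
    using \<open>d \<in> S - E\<close> finite_S by (simp add: d_def)
  finally show ?thesis ..
next
  case False
  have "indicator B (exit_time \<omega>) * f (X \<omega> (exit_time \<omega>)) = 0"
  proof (cases "0 \<le> exit_time \<omega>")
    case True
    with False assms(2) show ?thesis
      unfolding exits_def by auto
  next
    case False
    with assms(3) show ?thesis
      by (auto simp: indicator_def)
  qed
  with False show ?thesis
    unfolding exit_event_def by simp
qed

lemma set_integrable_exit_value_density:
  fixes f :: "'s \<Rightarrow> real"
  shows "set_integrable lborel {0..} (\<lambda>x. \<Sum>c\<in>S - E. f c * exit_density c x)"
proof -
  have "integrable lborel (\<lambda>x. f c * (indicator {0..} x *\<^sub>R exit_density c x))" if "c \<in> S - E" for c
    using set_integrable_exit_density[OF that] unfolding set_integrable_def by (rule integrable_mult_right)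
  then show ?thesis
    unfolding set_integrable_def scaleR_sum_right by (intro Bochner_Integration.integrable_sum) (simp add: mult.left_commute)
qed

lemma integral_exit_value:
  fixes f :: "'s \<Rightarrow> real"
  assumes "\<forall>c\<in>E. f c = 0" "B \<in> sets borel" "B \<subseteq> {0..}"
  shows "(\<integral>\<omega>. indicator B (exit_time \<omega>) * f (X \<omega> (exit_time \<omega>)) \<partial>P)
       = (LINT x:B|lborel. \<Sum>c\<in>S - E. f c * exit_density c x)"
proof -
  let ?A = "\<lambda>c. exit_event c \<inter> {\<omega>\<in>space P. exit_time \<omega> \<in> B}"
  have sets_A: "?A c \<in> sets P" for c
    using sets_exit_time_in[OF assms(2)] by simp
  have "(\<integral>\<omega>. indicator B (exit_time \<omega>) * f (X \<omega> (exit_time \<omega>)) \<partial>P)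
      = (\<integral>\<omega>. (\<Sum>c\<in>S - E. f c * indicator (?A c) \<omega>) \<partial>P)"
    using exit_value_eq_sum_indicator[OF _ assms(1,3)] by (intro Bochner_Integration.integral_cong) auto
  also have "\<dots> = (\<Sum>c\<in>S - E. f c * measure P (?A c))"
    using sets_A by (subst Bochner_Integration.integral_sum) (auto simp: emeasure_eq_measure Int_absorb2 sets.sets_into_space)
  also have "\<dots> = (\<Sum>c\<in>S - E. f c * (LINT x:B|lborel. exit_density c x))"
    using measure_exit_event_exit_time_in assms(2,3) by simp
  also have "\<dots> = (LINT x:B|lborel. \<Sum>c\<in>S - E. f c * exit_density c x)"
  proof -
    have "set_integrable lborel B (exit_density c)" if "c \<in> S - E" for c
      using set_integrable_subset[OF set_integrable_exit_density[OF that]] assms(2,3) by simp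
    then show ?thesis
      unfolding set_lebesgue_integral_def set_integrable_def scaleR_sum_right
      by (subst Bochner_Integration.integral_sum) (auto simp: mult.left_commute)
  qed
  finally show ?thesis .
qed

end

lemma notin_Estates [simp]: "DeltaO \<notin> Estates p" "DeltaA \<notin> Estates p" "Cem \<notin> Estates p"
  by (auto simp: Estates_def)

lemma Sall_minus_Estates: "Sall p - Estates p = {DeltaO, DeltaA, Cem}"
  by (auto simp: Sall_def)

lemma absorbing_ctmc_Qfull:
  assumes "ctmc (Sall p) (Qfull p T s l) Pj X j" "j \<in> Estates p"
  shows "absorbing_ctmc (Sall p) (Qfull p T s l) Pj X j (Estates p)"
  using assms by unfold_locales (auto simp: Sall_def Qfull_def finite_Estates)

lemma mexp_Qfull_eq_mexp_Gmat:
  assumes "k \<in> Estates p"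
  shows "mexp (Sall p) (mscale x (Qfull p T s l)) j k = mexp (Estates p) (mscale x (Gmat T s l)) j k"
proof -
  have "mexp (Sall p) (mscale x (Qfull p T s l)) j k = mexp (Estates p) (mscale x (Qfull p T s l)) j k"
    by (rule mexp_restrict) (auto simp: Sall_def finite_Estates mscale_def Qfull_def)
  also have "\<dots> = mexp (Estates p) (mscale x (Gmat T s l)) j k"
    using assms by (intro mexp_cong) (auto simp: mscale_def Qfull_def)
  finally show ?thesis .
qed

lemma Gmat_Delta_difference:
  "k \<in> Estates p \<Longrightarrow> Gmat T s l k DeltaO - Gmat T s l k DeltaA = signed_lift s k"
  by (auto elim: Estates_cases simp: signed_lift_def splus_def sminus_def max_def)

lemma beta_weighted_exit_density:
  assumes "j \<in> Estates p"
  shows "(\<Sum>c\<in>Sall p - Estates p. beta c *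
            (\<Sum>k\<in>Sall p. mexp (Sall p) (mscale x (Qfull p T s l)) j k * Qfull p T s l k c))
       = (\<Sum>c\<in>Estates p. mexp (Estates p) (mscale x (Gmat T s l)) j c * signed_lift s c)"
proof -
  have into_Delta: "(\<Sum>k\<in>Sall p. mexp (Sall p) (mscale x (Qfull p T s l)) j k * Qfull p T s l k c)
      = (\<Sum>k\<in>Estates p. mexp (Estates p) (mscale x (Gmat T s l)) j k * Gmat T s l k c)"
    if "c \<in> {DeltaO, DeltaA}" for c
  proof (rule sum.mono_neutral_cong_right)
    show "finite (Sall p)" "Estates p \<subseteq> Sall p"
      by (auto simp: Sall_def finite_Estates)
  qed (use that in \<open>auto simp: Qfull_def mexp_Qfull_eq_mexp_Gmat\<close>)
  let ?M = "\<lambda>k. mexp (Estates p) (mscale x (Gmat T s l)) j k"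
  have "(\<Sum>c\<in>Sall p - Estates p. beta c *
            (\<Sum>k\<in>Sall p. mexp (Sall p) (mscale x (Qfull p T s l)) j k * Qfull p T s l k c))
      = (\<Sum>k\<in>Estates p. ?M k * Gmat T s l k DeltaO) - (\<Sum>k\<in>Estates p. ?M k * Gmat T s l k DeltaA)"
    unfolding Sall_minus_Estates by (simp add: into_Delta)
  also have "\<dots> = (\<Sum>k\<in>Estates p. ?M k * signed_lift s k)"
    unfolding sum_subtractf[symmetric] right_diff_distrib[symmetric]
    by (intro sum.cong refl) (simp add: Gmat_Delta_difference)
  finally show ?thesis .
qed

lemma exit_beta_density:
  assumes "ctmc (Sall p) (Qfull p T s l) Pj X j" "j \<in> Estates p"
  shows "set_integrable lborel {0..}
           (\<lambda>x. \<Sum>c\<in>Estates p. mexp (Estates p) (mscale x (Gmat T s l)) j c * signed_lift s c)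
    \<and> (\<forall>B\<in>sets borel. B \<subseteq> {0..} \<longrightarrow>
       (\<integral>\<omega>. indicator B (tau p X \<omega>) * beta (X \<omega> (tau p X \<omega>)) \<partial>Pj)
        = (LINT x:B|lborel. \<Sum>c\<in>Estates p. mexp (Estates p) (mscale x (Gmat T s l)) j c * signed_lift s c))"
proof -
  interpret absorbing_ctmc "Sall p" "Qfull p T s l" Pj X j "Estates p"
    using absorbing_ctmc_Qfull[OF assms] .
  have beta_Estates: "\<forall>c\<in>Estates p. beta c = 0"
    by (auto simp: Estates_def)
  have "exit_time = tau p X"
    by (intro ext) (simp add: exit_time_def tau_def)
  then show ?thesis
    using set_integrable_exit_value_density[of beta] integral_exit_value[OF beta_Estates]
    unfolding exit_density_def beta_weighted_exit_density[OF assms(2)] by simp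
qed

theorem theorem3p1:
  fixes p :: nat and T :: "nat \<Rightarrow> nat \<Rightarrow> real" and s :: "nat \<Rightarrow> real" and l :: real
    and P :: "st \<Rightarrow> 'w measure" and X :: "'w \<Rightarrow> real \<Rightarrow> st" and i :: nat
  assumes "1 \<le> p"
    and "lambda0 p T s \<le> l"
    and "\<forall>j\<in>Estates p. ctmc (Sall p) (Qfull p T s l) (P j) X j"
    and "\<forall>j\<in>Estates p. transient (P j) X j"
    and "i \<in> {1..p}"
  shows
    "(\<forall>x\<ge>0. (\<Sum>k\<in>{1..p}. mexp {1..p} (mscale x (\<lambda>a b. T a b - (if a = b then l else 0))) i k * s k)
        = (\<Sum>c\<in>Estates p. mexp (Estates p) (mscale x (Gmat T s l)) (Ost i) c
              * (case c of Ost k \<Rightarrow> s k | Ast k \<Rightarrow> - s k | _ \<Rightarrow> 0)))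
   \<and> (\<forall>x\<ge>0. - (\<Sum>k\<in>{1..p}. mexp {1..p} (mscale x (\<lambda>a b. T a b - (if a = b then l else 0))) i k * s k)
        = (\<Sum>c\<in>Estates p. mexp (Estates p) (mscale x (Gmat T s l)) (Ast i) c
              * (case c of Ost k \<Rightarrow> s k | Ast k \<Rightarrow> - s k | _ \<Rightarrow> 0)))
   \<and> set_integrable lborel {0..}
       (\<lambda>x. \<Sum>k\<in>{1..p}. mexp {1..p} (mscale x (\<lambda>a b. T a b - (if a = b then l else 0))) i k * s k)
   \<and> (\<forall>B\<in>sets borel. B \<subseteq> {0..} \<longrightarrow>
        (\<integral>\<omega>. indicator B (tau p X \<omega>) * beta (X \<omega> (tau p X \<omega>)) \<partial>P (Ost i))
          = (LINT x:B|lborel. (\<Sum>k\<in>{1..p}. mexp {1..p} (mscale x (\<lambda>a b. T a b - (if a = b then l else 0))) i k * s k)))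
   \<and> (\<forall>B\<in>sets borel. B \<subseteq> {0..} \<longrightarrow>
        (\<integral>\<omega>. indicator B (tau p X \<omega>) * beta (X \<omega> (tau p X \<omega>)) \<partial>P (Ast i))
          = (LINT x:B|lborel. - (\<Sum>k\<in>{1..p}. mexp {1..p} (mscale x (\<lambda>a b. T a b - (if a = b then l else 0))) i k * s k)))"
proof -
  have O: "Ost i \<in> Estates p" and A: "Ast i \<in> Estates p"
    using assms(5) by (auto simp: Estates_def)
  have ctmc_O: "ctmc (Sall p) (Qfull p T s l) (P (Ost i)) X (Ost i)"
    and ctmc_A: "ctmc (Sall p) (Qfull p T s l) (P (Ast i)) X (Ast i)"
    using assms(3) O A by blast+
  let ?f = "\<lambda>x. \<Sum>k\<in>{1..p}. mexp {1..p} (mscale x (diag_shift T l)) i k * s k"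
  have density_O: "(\<Sum>c\<in>Estates p. mexp (Estates p) (mscale x (Gmat T s l)) (Ost i) c * signed_lift s c) = ?f x"
    and density_A: "(\<Sum>c\<in>Estates p. mexp (Estates p) (mscale x (Gmat T s l)) (Ast i) c * signed_lift s c) = - ?f x"
    for x
    using mexp_Gmat_signed_lift[OF O] mexp_Gmat_signed_lift[OF A] by (simp_all add: signed_lift_def)
  show ?thesis
    unfolding signed_lift_def[symmetric] density_O density_A
    using exit_beta_density[OF ctmc_O O, unfolded density_O] exit_beta_density[OF ctmc_A A, unfolded density_A]
    by blast
qed

end
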